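(* Let $K$ be a positive integer and $m$ an integer with $m\equiv K\pmod 2$. Then \[ C_{m,K}^{2K}(q)=\frac{q^{s(m,K,2K)}}{J_{1}^3}\,f_{K+1,K+1,1}\big(q^{K+1},q^{1+\frac{1}{2}(m+K)},q\big). \]
   Context: Let $q=e^{2\pi i\tau}$ with $\operatorname{Im}\tau>0$, and for real $\alpha$ put $q^{\alpha}:=e^{2\pi i\alpha\tau}$. For $x\in\mathbb{C}^*$, $j(x;q):=\sum_{n\in\mathbb{Z}}(-1)^nq^{n(n-1)/2}x^n$, and $J_1:=\prod_{i\ge1}(1-q^i)$. For positive integers $a,b,c$ and $x,y\in\mathbb{C}^*$, the Hecke-type double-sum is $f_{a,b,c}(x,y,q):=\Big(\sum_{r,s\ge0}-\sum_{r,s<0}\Big)(-1)^{r+s}x^ry^sq^{a\binom{r}{2}+brs+c\binom{s}{2}}$. For a positive integer $N$ and integers $m,\ell$ with $0\le\ell\le N$, $m\equiv\ell\pmod 2$, put $s(m,\ell,N):=-\frac18+\frac{(\ell+1)^2}{4(N+2)}-\frac{m^2}{4N}$. The level-$N$ $A_1^{(1)}$ string function is given by $C_{m,\ell}^{N}(q)=\dfrac{q^{s(m,\ell,N)}}{J_1^3}\, f_{1,1+N,1}\big(q^{1+\frac12(m+\ell)},q^{1-\frac12(m-\ell)},q\big)$. *)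

theory Defs
  imports "HOL-Analysis.Analysis"
begin

text \<open>Nome q = exp(2 pi i tau), and real powers q^alpha := exp(2 pi i alpha tau).\<close>
definition nome :: "complex \<Rightarrow> complex" where
  "nome \<tau> = exp (2 * of_real pi * \<i> * \<tau>)"

definition qpow :: "complex \<Rightarrow> real \<Rightarrow> complex" where
  "qpow \<tau> \<alpha> = exp (2 * of_real pi * \<i> * of_real \<alpha> * \<tau>)"

definition J1 :: "complex \<Rightarrow> complex" where
  "J1 q = (\<Prod>i. 1 - q ^ Suc i)"

definition hecke_term :: "int \<Rightarrow> int \<Rightarrow> int \<Rightarrow> complex \<Rightarrow> complex \<Rightarrow> complex \<Rightarrow> int \<times> int \<Rightarrow> complex" where
  "hecke_term a b c x y q = (\<lambda>(r, s).
     (-1) powi (r + s) * x powi r * y powi s *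
     q powi (a * (r * (r - 1) div 2) + b * r * s + c * (s * (s - 1) div 2)))"

definition hecke_f :: "int \<Rightarrow> int \<Rightarrow> int \<Rightarrow> complex \<Rightarrow> complex \<Rightarrow> complex \<Rightarrow> complex" where
  "hecke_f a b c x y q =
     (\<Sum>\<^sub>\<infinity>p\<in>{(r, s). 0 \<le> r \<and> 0 \<le> s}. hecke_term a b c x y q p)
   - (\<Sum>\<^sub>\<infinity>p\<in>{(r, s). r < 0 \<and> s < 0}. hecke_term a b c x y q p)"

definition sfun :: "int \<Rightarrow> int \<Rightarrow> int \<Rightarrow> real" where
  "sfun m l N = - 1/8 + (real_of_int l + 1)^2 / (4 * (real_of_int N + 2)) - (real_of_int m)^2 / (4 * real_of_int N)"

text \<open>Level-N string function C^N_{m,l}(q), as a function of tau.\<close>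
definition string_fn :: "int \<Rightarrow> int \<Rightarrow> int \<Rightarrow> complex \<Rightarrow> complex" where
  "string_fn N m l \<tau> = qpow \<tau> (sfun m l N) / (J1 (nome \<tau>)) ^ 3 *
     hecke_f 1 (1 + N) 1 (qpow \<tau> (1 + (real_of_int m + real_of_int l) / 2))
                         (qpow \<tau> (1 - (real_of_int m - real_of_int l) / 2)) (nome \<tau>)"

end

(*
  Split the summation lattice of f_{K+1,K+1,1} by the parity of the first index:
  (u, v) = (2s, r - s) or (u, v) = (-2r - 1, r - s). When x y = q^(K+2), both
  substitutions turn the summand of f_{K+1,K+1,1}(q^(K+1), x, q) into the summand
  (r, s) of f_{1,1+2K,1}(x, y, q), the odd one with an extra sign. The even branch
  pulls the positive (negative) quadrant back to the part of the positive (negative)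
  quadrant with s <= r (r < s), and the odd branch pulls it back to the complementary
  part of the opposite quadrant, so the sign turns the difference of quadrant sums
  into the same difference. The rearrangement is justified by absolute convergence
  on the cone r s >= 0, where the exponent grows like |r| + |s|.
*)

theory Submission
  imports Defs
begin

definition hecke_exponent :: "int \<Rightarrow> int \<Rightarrow> int \<Rightarrow> real \<Rightarrow> real \<Rightarrow> int \<times> int \<Rightarrow> real" where
  "hecke_exponent a b c \<alpha> \<beta> = (\<lambda>(r, s).
     \<alpha> * r + \<beta> * s + a * (r * (r - 1) / 2) + b * r * s + c * (s * (s - 1) / 2))"

lemma of_int_times_pred_div_2: "of_int (n * (n - 1) div 2) = (of_int n * (of_int n - 1) / 2 :: 'a::field_char_0)"
  by (subst of_int_div) auto

lemma hecke_term_exp: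
  fixes z :: complex and \<alpha> \<beta> :: real
  shows "hecke_term a b c (exp (z * \<alpha>)) (exp (z * \<beta>)) (exp z) p =
    (-1) powi (fst p + snd p) * exp (z * hecke_exponent a b c \<alpha> \<beta> p)"
proof -
  obtain r s where "p = (r, s)"
    by fastforce
  then show ?thesis
    by (simp add: hecke_term_def hecke_exponent_def exp_power_int exp_add[symmetric]
        of_int_times_pred_div_2) (simp add: algebra_simps)
qed

lemma abs_le_half_square_plus_linear:
  fixes x q :: real
  shows "\<bar>x\<bar> - (\<bar>q\<bar> + 1)\<^sup>2 / 2 \<le> x\<^sup>2 / 2 + q * x"
proof -
  have "2 * \<bar>x\<bar> * (\<bar>q\<bar> + 1) \<le> \<bar>x\<bar>\<^sup>2 + (\<bar>q\<bar> + 1)\<^sup>2"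
    by (rule sum_squares_bound)
  moreover have "- (\<bar>q\<bar> * \<bar>x\<bar>) \<le> q * x"
    using abs_ge_minus_self[of "q * x"] by (simp add: abs_mult)
  ultimately show ?thesis
    by (simp add: algebra_simps)
qed

lemma quadratic_ge_abs_minus_const:
  fixes x p a :: real
  assumes "a \<ge> 1"
  shows "a * (x * (x - 1) / 2) + p * x \<ge> \<bar>x\<bar> - (\<bar>p - a / 2\<bar> + 1)\<^sup>2 / 2"
proof -
  have "a * (x * (x - 1) / 2) + p * x = (a - 1) * x\<^sup>2 / 2 + (x\<^sup>2 / 2 + (p - a / 2) * x)"
    by (simp add: power2_eq_square field_simps)
  moreover have "(a - 1) * x\<^sup>2 / 2 \<ge> 0"
    using assms by simp
  ultimately show ?thesis
    using abs_le_half_square_plus_linear[of x "p - a / 2"] by linarith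
qed

lemma hecke_exponent_lower_bound:
  assumes "a \<ge> 1" "c \<ge> 1" "b \<ge> 0" "0 \<le> r * s"
  shows "hecke_exponent a b c \<alpha> \<beta> (r, s) \<ge> \<bar>r\<bar> + \<bar>s\<bar>
           - ((\<bar>\<alpha> - a / 2\<bar> + 1)\<^sup>2 / 2 + (\<bar>\<beta> - c / 2\<bar> + 1)\<^sup>2 / 2)"
proof -
  have "0 \<le> b * (r * s)"
    using assms(3,4) by simp
  then have "0 \<le> real_of_int b * r * s"
    by (metis of_int_0_le_iff of_int_mult mult.assoc)
  moreover have "a * (r * (r - 1) / 2) + \<alpha> * r \<ge> \<bar>r\<bar> - (\<bar>\<alpha> - a / 2\<bar> + 1)\<^sup>2 / 2"
    using quadratic_ge_abs_minus_const[of a "of_int r" \<alpha>] assms(1) by simp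
  moreover have "c * (s * (s - 1) / 2) + \<beta> * s \<ge> \<bar>s\<bar> - (\<bar>\<beta> - c / 2\<bar> + 1)\<^sup>2 / 2"
    using quadratic_ge_abs_minus_const[of c "of_int s" \<beta>] assms(2) by simp
  ultimately show ?thesis
    by (simp add: hecke_exponent_def)
qed

lemma summable_on_exp_neg_abs_int:
  fixes d :: real
  assumes "d > 0"
  shows "(\<lambda>r::int. exp (- d * \<bar>r\<bar>)) summable_on UNIV"
proof -
  let ?h = "\<lambda>r::int. exp (- d * \<bar>r\<bar>)"
  have geometric: "(\<lambda>n::nat. exp (- d) ^ n) summable_on UNIV"
    using assms by (subst summable_on_UNIV_nonneg_real_iff) (auto intro!: summable_geometric)
  have "?h \<circ> int = (\<lambda>n. exp (- d) ^ n)" "?h \<circ> (\<lambda>n. - int n) = (\<lambda>n. exp (- d) ^ n)"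
    by (auto simp: fun_eq_iff exp_of_nat_mult[symmetric] mult.commute)
  then have "?h summable_on range int" "?h summable_on range (\<lambda>n. - int n)"
    using geometric by (simp_all add: summable_on_reindex inj_on_def)
  moreover have "range int \<union> range (\<lambda>n. - int n) = UNIV"
  proof -
    have "r \<in> range int \<union> range (\<lambda>n. - int n)" for r :: int
    proof (cases "0 \<le> r")
      case True
      then have "r = int (nat r)" by simp
      then show ?thesis by blast
    next
      case False
      then have "r = - int (nat (- r))" by simp
      then show ?thesis by blast
    qed
    then show ?thesis by blast
  qed
  ultimately show ?thesis
    by (metis summable_on_union)
qed

lemma summable_on_exp_neg_abs_int_pairs:
  fixes d :: real
  assumes "d > 0"
  shows "(\<lambda>(r::int, s::int). exp (- d * (\<bar>r\<bar> + \<bar>s\<bar>))) summable_on UNIV"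
proof -
  let ?h = "\<lambda>r::int. exp (- d * \<bar>r\<bar>)"
  have h: "?h summable_on UNIV"
    using summable_on_exp_neg_abs_int[OF assms] .
  have "((\<lambda>s. ?h r * ?h s) has_sum (?h r * infsum ?h UNIV)) UNIV" for r
    using has_sum_cmult_right[OF has_sum_infsum[OF h]] .
  moreover have "(\<lambda>r. ?h r * infsum ?h UNIV) summable_on UNIV"
    using summable_on_cmult_left[OF h] .
  ultimately have "(\<lambda>(r, s). ?h r * ?h s) summable_on UNIV \<times> UNIV"
    by (intro summable_on_SigmaI) auto
  then show ?thesis
    by (simp add: exp_add[symmetric] algebra_simps)
qed

lemma hecke_term_summable:
  fixes z :: complex and \<alpha> \<beta> :: real
  assumes "Re z < 0" "a \<ge> 1" "c \<ge> 1" "b \<ge> 0"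
  shows "hecke_term a b c (exp (z * \<alpha>)) (exp (z * \<beta>)) (exp z) summable_on {(r, s). 0 \<le> r * s}"
proof -
  define T where "T = hecke_term a b c (exp (z * \<alpha>)) (exp (z * \<beta>)) (exp z)"
  define d where "d = - Re z"
  define C where "C = (\<bar>\<alpha> - a / 2\<bar> + 1)\<^sup>2 / 2 + (\<bar>\<beta> - c / 2\<bar> + 1)\<^sup>2 / 2"
  define G where "G = (\<lambda>(r::int, s::int). exp (d * C) * exp (- d * (\<bar>r\<bar> + \<bar>s\<bar>)))"
  have "d > 0"
    using assms(1) by (simp add: d_def)
  then have "G summable_on UNIV"
    using summable_on_cmult_right[OF summable_on_exp_neg_abs_int_pairs]
    by (simp add: G_def case_prod_unfold)
  then have "G summable_on {(r, s). 0 \<le> r * s}"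
    by (rule summable_on_subset) simp
  moreover have "norm (T (r, s)) \<le> G (r, s)" if "0 \<le> r * s" for r s
  proof -
    have "norm (T (r, s)) = exp (- d * hecke_exponent a b c \<alpha> \<beta> (r, s))"
      by (simp add: T_def hecke_term_exp norm_mult norm_power_int d_def)
    also have "\<dots> \<le> exp (- d * (\<bar>r\<bar> + \<bar>s\<bar> - C))"
      using hecke_exponent_lower_bound[OF assms(2-4) that, of \<alpha> \<beta>] \<open>d > 0\<close>
      by (simp add: C_def)
    also have "\<dots> = G (r, s)"
      by (simp add: G_def exp_add[symmetric] algebra_simps)
    finally show ?thesis .
  qed
  ultimately have "(\<lambda>p. norm (T p)) summable_on {(r, s). 0 \<le> r * s}"
    by (intro Infinite_Sum.abs_summable_on_comparison_test'[of G]) auto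
  then show ?thesis
    unfolding T_def by (rule abs_summable_summable)
qed

definition even_param :: "int \<times> int \<Rightarrow> int \<times> int" where
  "even_param = (\<lambda>(r, s). (2 * s, r - s))"

definition odd_param :: "int \<times> int \<Rightarrow> int \<times> int" where
  "odd_param = (\<lambda>(r, s). (- 2 * r - 1, r - s))"

lemma inj_even_param: "inj even_param"
  by (auto simp: inj_def even_param_def)

lemma inj_odd_param: "inj odd_param"
  by (auto simp: inj_def odd_param_def)

lemma range_even_param_Un_range_odd_param: "range even_param \<union> range odd_param = UNIV"
proof -
  have "(u, v) \<in> range even_param \<union> range odd_param" for u v :: int
  proof (cases "even u")
    case True
    then obtain k where "u = 2 * k" by blast
    then have "(u, v) = even_param (v + k, k)" by (simp add: even_param_def)
    then show ?thesis by blast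
  next
    case False
    then obtain k where "u = 2 * k + 1" by (blast elim: oddE)
    then have "(u, v) = odd_param (- k - 1, - k - 1 - v)" by (simp add: odd_param_def)
    then show ?thesis by blast
  qed
  then show ?thesis by auto
qed

lemma range_even_param_Int_range_odd_param: "range even_param \<inter> range odd_param = {}"
proof -
  have "2 * s \<noteq> - 2 * r - 1" for r s :: int
    by presburger
  then show ?thesis
    by (auto simp: even_param_def odd_param_def)
qed

lemma infsum_parity_split:
  fixes T T' :: "int \<times> int \<Rightarrow> 'a::{topological_ab_group_add, t2_space}"
  assumes "T summable_on even_param -` A" "T summable_on odd_param -` A"
    and "\<And>p. T' (even_param p) = T p" "\<And>p. T' (odd_param p) = - T p"
  shows "infsum T' A = infsum T (even_param -` A) - infsum T (odd_param -` A)"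
proof -
  let ?E = "even_param -` A" and ?O = "odd_param -` A"
  have inj: "inj_on even_param ?E" "inj_on odd_param ?O"
    using inj_on_subset[OF inj_even_param] inj_on_subset[OF inj_odd_param] by auto
  have comp: "T' \<circ> even_param = T" "T' \<circ> odd_param = (\<lambda>p. - T p)"
    using assms(3,4) by auto
  have "T' summable_on even_param ` ?E"
    unfolding summable_on_reindex[OF inj(1)] comp using assms(1) .
  moreover have "T' summable_on odd_param ` ?O"
    unfolding summable_on_reindex[OF inj(2)] comp summable_on_uminus using assms(2) .
  moreover have "even_param ` ?E \<inter> odd_param ` ?O = {}"
    using range_even_param_Int_range_odd_param by blast
  moreover have "A = even_param ` ?E \<union> odd_param ` ?O"
    using range_even_param_Un_range_odd_param by auto
  ultimately have "infsum T' A = infsum T' (even_param ` ?E) + infsum T' (odd_param ` ?O)"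
    by (metis infsum_Un_disjoint)
  also have "\<dots> = infsum T ?E - infsum T ?O"
    unfolding infsum_reindex[OF inj(1)] infsum_reindex[OF inj(2)] comp infsum_uminus by simp
  finally show ?thesis .
qed

definition quadrant_difference :: "(int \<times> int \<Rightarrow> 'a::{topological_ab_group_add, t2_space}) \<Rightarrow> 'a" where
  "quadrant_difference T =
     infsum T {(r, s). 0 \<le> r \<and> 0 \<le> s} - infsum T {(r, s). r < 0 \<and> s < 0}"

lemma hecke_f_eq_quadrant_difference: "hecke_f a b c x y q = quadrant_difference (hecke_term a b c x y q)"
  by (simp add: hecke_f_def quadrant_difference_def)

lemma quadrant_difference_parity_substitution:
  fixes T T' :: "int \<times> int \<Rightarrow> 'a::banach"
  assumes "T summable_on {(r, s). 0 \<le> r * s}"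
    and "\<And>p. T' (even_param p) = T p" "\<And>p. T' (odd_param p) = - T p"
  shows "quadrant_difference T' = quadrant_difference T"
proof -
  define Pos where "Pos = {(r::int, s::int). 0 \<le> r \<and> 0 \<le> s}"
  define Neg where "Neg = {(r::int, s::int). r < 0 \<and> s < 0}"
  let ?Cone = "{(r::int, s::int). 0 \<le> r * s}"
  have split: "Pos = even_param -` Pos \<union> odd_param -` Neg"
    "Neg = even_param -` Neg \<union> odd_param -` Pos"
    and disjoint: "even_param -` Pos \<inter> odd_param -` Neg = {}"
    "even_param -` Neg \<inter> odd_param -` Pos = {}"
    and in_cone: "even_param -` Pos \<subseteq> ?Cone" "odd_param -` Pos \<subseteq> ?Cone"
    "even_param -` Neg \<subseteq> ?Cone" "odd_param -` Neg \<subseteq> ?Cone"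
    by (auto simp: Pos_def Neg_def even_param_def odd_param_def zero_le_mult_iff)
  have summable: "T summable_on X" if "X \<subseteq> ?Cone" for X
    using summable_on_subset_banach[OF assms(1) that] .
  have T_split: "infsum T Pos = infsum T (even_param -` Pos) + infsum T (odd_param -` Neg)"
    "infsum T Neg = infsum T (even_param -` Neg) + infsum T (odd_param -` Pos)"
    by (subst split, rule infsum_Un_disjoint; intro summable in_cone disjoint)+
  have T'_split: "infsum T' Pos = infsum T (even_param -` Pos) - infsum T (odd_param -` Pos)"
    "infsum T' Neg = infsum T (even_param -` Neg) - infsum T (odd_param -` Neg)"
    by (rule infsum_parity_split[OF summable summable assms(2,3)]; rule in_cone)+
  have "quadrant_difference U = infsum U Pos - infsum U Neg" for U :: "int \<times> int \<Rightarrow> 'a"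
    by (simp add: quadrant_difference_def Pos_def Neg_def)
  then show ?thesis
    by (simp only: T_split T'_split) (simp add: algebra_simps)
qed

lemma hecke_exponent_even_param:
  fixes \<alpha> \<beta> :: real and K :: int
  assumes "\<alpha> + \<beta> = real_of_int K + 2"
  shows "hecke_exponent (K + 1) (K + 1) 1 (real_of_int K + 1) \<alpha> (even_param p) =
    hecke_exponent 1 (1 + 2 * K) 1 \<alpha> \<beta> p"
proof -
  have "\<beta> = real_of_int K + 2 - \<alpha>"
    using assms by simp
  then show ?thesis
    by (simp only: even_param_def hecke_exponent_def case_prod_unfold) (simp add: field_simps)
qed

lemma hecke_exponent_odd_param:
  fixes \<alpha> \<beta> :: real and K :: int
  assumes "\<alpha> + \<beta> = real_of_int K + 2"
  shows "hecke_exponent (K + 1) (K + 1) 1 (real_of_int K + 1) \<alpha> (odd_param p) =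
    hecke_exponent 1 (1 + 2 * K) 1 \<alpha> \<beta> p"
proof -
  have "\<beta> = real_of_int K + 2 - \<alpha>"
    using assms by simp
  then show ?thesis
    by (simp only: odd_param_def hecke_exponent_def case_prod_unfold) (simp add: field_simps)
qed

lemma hecke_f_parity_substitution:
  fixes z :: complex and \<alpha> \<beta> :: real
  assumes "Re z < 0" "K \<ge> 0" "\<alpha> + \<beta> = real_of_int K + 2"
  shows "hecke_f 1 (1 + 2 * K) 1 (exp (z * \<alpha>)) (exp (z * \<beta>)) (exp z) =
    hecke_f (K + 1) (K + 1) 1 (exp (z * of_real (real_of_int K + 1))) (exp (z * \<alpha>)) (exp z)"
proof -
  let ?T = "hecke_term 1 (1 + 2 * K) 1 (exp (z * \<alpha>)) (exp (z * \<beta>)) (exp z)"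
  let ?T' = "hecke_term (K + 1) (K + 1) 1 (exp (z * of_real (real_of_int K + 1))) (exp (z * \<alpha>)) (exp z)"
  have "?T' (even_param p) = ?T p" for p
    by (simp only: hecke_term_exp hecke_exponent_even_param[OF assms(3)])
      (simp add: even_param_def case_prod_unfold add.commute)
  moreover have "?T' (odd_param p) = - ?T p" for p
  proof -
    obtain r s where p: "p = (r, s)"
      by fastforce
    have "- 2 * r - 1 + (r - s) = - (r + s + 1)"
      by simp
    then have "(-1 :: complex) powi (fst (odd_param p) + snd (odd_param p)) = - ((-1) powi (fst p + snd p))"
      by (simp only: p odd_param_def prod.case fst_conv snd_conv power_int_minus_one_minus)
        (simp add: power_int_add)
    then show ?thesis
      by (simp only: hecke_term_exp hecke_exponent_odd_param[OF assms(3)]) simp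
  qed
  moreover have "?T summable_on {(r, s). 0 \<le> r * s}"
    using assms(1,2) by (intro hecke_term_summable) auto
  ultimately show ?thesis
    unfolding hecke_f_eq_quadrant_difference
    by (intro quadrant_difference_parity_substitution[symmetric]) auto
qed

theorem corollary1p2:
  fixes K m :: int and \<tau> :: complex
  assumes "Im \<tau> > 0" and "K > 0" and "m mod 2 = K mod 2"
  shows "string_fn (2 * K) m K \<tau> =
    qpow \<tau> (sfun m K (2 * K)) / (J1 (nome \<tau>)) ^ 3 *
    hecke_f (K + 1) (K + 1) 1 (qpow \<tau> (real_of_int K + 1))
      (qpow \<tau> (1 + (real_of_int m + real_of_int K) / 2)) (nome \<tau>)"
proof -
  define z where "z = 2 * complex_of_real pi * \<i> * \<tau>"
  have "Re z < 0"
    using assms(1) by (simp add: z_def)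
  have qpow: "qpow \<tau> \<gamma> = exp (z * of_real \<gamma>)" for \<gamma>
    by (simp add: qpow_def z_def mult_ac)
  have nome: "nome \<tau> = exp z"
    by (simp add: nome_def z_def)
  have "(1 + (real_of_int m + real_of_int K) / 2) + (1 - (real_of_int m - real_of_int K) / 2)
      = real_of_int K + 2"
    by (simp add: field_simps)
  from hecke_f_parity_substitution[OF \<open>Re z < 0\<close> _ this] assms(2) show ?thesis
    by (simp add: string_fn_def qpow nome)
qed

end
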